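(* Let $\mathcal{S}=(L,A,<)$ be an abstract numeration system built on a prefix-closed regular language $L$. A sequence $\mathbf{x}$ over a finite alphabet is $\mathcal{S}$-automatic if and only if the labeled tree $T(L)$ decorated by $\mathbf{x}$ is rational.
   Context: An abstract numeration system is a triple $\mathcal{S}=(L,A,<)$ with $L$ an infinite language over a totally ordered finite alphabet $A$; $\mathrm{rep}_{\mathcal{S}}(n)$ is the $(n+1)$st word of $L$ in radix order (shorter words first, then lexicographic), and $\mathrm{val}_{\mathcal{S}}$ is its inverse. $\mathbf{x}=x_0x_1\cdots$ is $\mathcal{S}$-automatic if there is a deterministic finite automaton with output $(Q,q_0,A,\delta,\tau)$ with $x_n=\tau(\delta(q_0,\mathrm{rep}_{\mathcal{S}}(n)))$ for all $n$. $T(L)$ is the tree whose nodes are the words of $L$, with an edge labeled $d$ from $w$ to $wd$ whenever $w,wd\in L$; it is decorated by $\mathbf{x}$ by giving node $w$ the decoration $x_{\mathrm{val}_{\mathcal{S}}(w)}$. For $w\in L$, the suffix $T[w]$ has domain $w^{-1}L=\{u: wu\in L\}$ and node $u$ of $T[w]$ has decoration $x_{\mathrm{val}_{\mathcal{S}}(wu)}$; two suffixes are equal if they have the same domain and the same decorations at every node of the domain. The decorated tree is rational if it has finitely many distinct suffixes. *)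

theory Defs
  imports Main
begin

definition prefix_closed :: "'a list set \<Rightarrow> bool" where
  "prefix_closed L \<longleftrightarrow> (\<forall>u v. u @ v \<in> L \<longrightarrow> u \<in> L)"

definition regular :: "('a::finite) list set \<Rightarrow> bool" where
  "regular L \<longleftrightarrow> (\<exists>(Q::nat set) q0 (\<delta>::nat \<Rightarrow> 'a \<Rightarrow> nat) F.
      finite Q \<and> q0 \<in> Q \<and> (\<forall>q\<in>Q. \<forall>a. \<delta> q a \<in> Q) \<and> F \<subseteq> Q \<and>
      L = {w. foldl \<delta> q0 w \<in> F})"

text \<open>Radix order (shorter words first, then lexicographic): this is exactly lenlex.\<close>

definition radix_less :: "('a::linorder) list \<Rightarrow> 'a list \<Rightarrow> bool" where
  "radix_less u v \<longleftrightarrow> (u, v) \<in> lenlex {(a, b). a < b}"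

definition val_ANS :: "('a::linorder) list set \<Rightarrow> 'a list \<Rightarrow> nat" where
  "val_ANS L w = card {v \<in> L. radix_less v w}"

definition rep_ANS :: "('a::linorder) list set \<Rightarrow> nat \<Rightarrow> 'a list" where
  "rep_ANS L n = (THE w. w \<in> L \<and> val_ANS L w = n)"

definition S_automatic :: "('a::{finite,linorder}) list set \<Rightarrow> (nat \<Rightarrow> 'b) \<Rightarrow> bool" where
  "S_automatic L x \<longleftrightarrow> (\<exists>(Q::nat set) q0 (\<delta>::nat \<Rightarrow> 'a \<Rightarrow> nat) (\<tau>::nat \<Rightarrow> 'b).
      finite Q \<and> q0 \<in> Q \<and> (\<forall>q\<in>Q. \<forall>a. \<delta> q a \<in> Q) \<and>
      (\<forall>n. x n = \<tau> (foldl \<delta> q0 (rep_ANS L n))))"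

text \<open>The suffix T[w] of the tree T(L) decorated by x: its domain is w^-1 L, and the
  node u carries the decoration x(val(wu)). Two suffixes are equal iff they have the same domain and
  the same decorations on it.\<close>

definition tree_suffix :: "('a::linorder) list set \<Rightarrow> (nat \<Rightarrow> 'b) \<Rightarrow> 'a list \<Rightarrow> ('a list \<Rightarrow> 'b option)" where
  "tree_suffix L x w = (\<lambda>u. if w @ u \<in> L then Some (x (val_ANS L (w @ u))) else None)"

definition rational_tree :: "('a::linorder) list set \<Rightarrow> (nat \<Rightarrow> 'b) \<Rightarrow> bool" where
  "rational_tree L x \<longleftrightarrow> finite (tree_suffix L x ` L)"

end

theory Submission
  imports Defs
begin

text \<open>If an automaton computes x, the suffix T[w] depends only on the pair of states reached
  after reading w in the automaton recognising L and in the automaton computing x; hence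
  there are finitely many suffixes. Conversely, the suffixes themselves form the states
  of an automaton: reading a letter a maps T[w] to T[wa], and the output is the decoration
  of the root. Reading rep(n) from T[\<epsilon>] leads to T[rep(n)], whose root carries x(n)
  because val is a bijection from L onto the natural numbers when L is infinite.\<close>

lemma radix_less_irrefl: "\<not> radix_less w w"
  unfolding radix_less_def by (rule lenlex_irreflexive) simp

lemma radix_less_trans: "radix_less u v \<Longrightarrow> radix_less v w \<Longrightarrow> radix_less u w"
  unfolding radix_less_def by (erule lenlex_trans) (auto simp: trans_def)

lemma radix_less_linear: "u \<noteq> v \<Longrightarrow> radix_less u v \<or> radix_less v u"
proof -
  assume "u \<noteq> v"
  have "total {(a, b::'a::linorder). a < b}"
    by (auto simp: total_on_def)
  then have "total (lenlex {(a, b::'a). a < b})"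
    by (rule total_lenlex)
  with \<open>u \<noteq> v\<close> show ?thesis
    unfolding radix_less_def total_on_def by blast
qed

lemma finite_radix_less: "finite {v. radix_less v (w::'a::{finite,linorder} list)}"
proof (rule finite_subset)
  show "{v. radix_less v w} \<subseteq> {v. set v \<subseteq> UNIV \<and> length v \<le> length w}"
    unfolding radix_less_def by (auto dest: lenlex_length)
  show "finite {v. set v \<subseteq> (UNIV::'a set) \<and> length v \<le> length w}"
    by (rule finite_lists_length_le) simp
qed

lemma finite_radix_less_in: "finite {v \<in> L. radix_less v (w::'a::{finite,linorder} list)}"
  using finite_radix_less[of w] by (rule finite_subset[rotated]) blast

lemma val_ANS_strict_mono:
  fixes u v :: "'a::{finite,linorder} list"
  assumes "u \<in> L" and "radix_less u v"
  shows "val_ANS L u < val_ANS L v"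
  unfolding val_ANS_def
proof (rule psubset_card_mono)
  show "finite {w \<in> L. radix_less w v}"
    by (rule finite_radix_less_in)
  show "{w \<in> L. radix_less w u} \<subset> {w \<in> L. radix_less w v}"
    using assms radix_less_trans radix_less_irrefl by blast
qed

lemma inj_on_val_ANS: "inj_on (val_ANS (L::'a::{finite,linorder} list set)) L"
  by (rule inj_onI) (metis radix_less_linear val_ANS_strict_mono less_irrefl)

lemma rep_ANS_val_ANS: "w \<in> L \<Longrightarrow> rep_ANS L (val_ANS L w) = (w::'a::{finite,linorder} list)"
  unfolding rep_ANS_def by (rule the_equality) (auto dest: inj_onD[OF inj_on_val_ANS])

text \<open>Counting argument: the val w + 1 words of L up to w are mapped injectively into
  {..val w}.\<close>

lemma val_ANS_image_up_to:
  fixes w :: "'a::{finite,linorder} list"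
  assumes "w \<in> L"
  shows "val_ANS L ` insert w {v \<in> L. radix_less v w} = {..val_ANS L w}"
proof (rule card_subset_eq)
  let ?P = "{v \<in> L. radix_less v w}"
  show "val_ANS L ` insert w ?P \<subseteq> {..val_ANS L w}"
    using val_ANS_strict_mono by fastforce
  have "inj_on (val_ANS L) (insert w ?P)"
    by (rule inj_on_subset[OF inj_on_val_ANS]) (use assms in blast)
  then have "card (val_ANS L ` insert w ?P) = card (insert w ?P)"
    by (rule card_image)
  also have "\<dots> = Suc (card ?P)"
    by (rule card_insert_disjoint[OF finite_radix_less_in]) (simp add: radix_less_irrefl)
  finally show "card (val_ANS L ` insert w ?P) = card {..val_ANS L w}"
    by (simp add: val_ANS_def)
qed simp

lemma val_ANS_surj:
  fixes L :: "'a::{finite,linorder} list set"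
  assumes "infinite L"
  shows "val_ANS L ` L = UNIV"
proof (intro set_eqI iffI)
  fix n :: nat
  have "infinite (val_ANS L ` L)"
    using assms finite_imageD inj_on_val_ANS by blast
  then obtain w where "w \<in> L" and "n \<le> val_ANS L w"
    unfolding finite_nat_set_iff_bounded_le by (auto simp: not_le intro: less_imp_le)
  then have "n \<in> val_ANS L ` insert w {v \<in> L. radix_less v w}"
    by (simp only: val_ANS_image_up_to) simp
  with \<open>w \<in> L\<close> show "n \<in> val_ANS L ` L"
    by blast
qed simp

lemma tree_suffix_append: "tree_suffix L x (w @ v) = (\<lambda>u. tree_suffix L x w (v @ u))"
  unfolding tree_suffix_def append_assoc ..

lemma finite_range_tree_suffix:
  assumes "prefix_closed L" and "rational_tree L x"
  shows "finite (range (tree_suffix L x))"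
proof (rule finite_subset)
  have "tree_suffix L x w = (\<lambda>_. None)" if "w \<notin> L" for w
  proof -
    have "w @ u \<notin> L" for u
      using assms(1) that unfolding prefix_closed_def by blast
    then show ?thesis
      unfolding tree_suffix_def by simp
  qed
  then show "range (tree_suffix L x) \<subseteq> insert (\<lambda>_. None) (tree_suffix L x ` L)"
    by blast
  show "finite (insert (\<lambda>_. None) (tree_suffix L x ` L))"
    using assms(2) unfolding rational_tree_def by simp
qed

lemma foldl_in_closed: "q \<in> Q \<Longrightarrow> \<forall>q\<in>Q. \<forall>a. \<delta> q a \<in> Q \<Longrightarrow> foldl \<delta> q w \<in> Q"
  by (induction w arbitrary: q) auto

text \<open>The definition of S_automatic takes natural numbers as states; any finite state set
  can be renumbered.\<close>

lemma S_automaticI: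
  fixes Q :: "'s set" and \<delta> :: "'s \<Rightarrow> 'a::{finite,linorder} \<Rightarrow> 's"
  assumes "finite Q" and "q0 \<in> Q" and closed: "\<forall>q\<in>Q. \<forall>a. \<delta> q a \<in> Q"
    and "\<And>n. x n = \<tau> (foldl \<delta> q0 (rep_ANS L n))"
  shows "S_automatic L x"
proof -
  obtain g :: "'s \<Rightarrow> nat" where "inj_on g Q"
    using finite_imp_inj_to_nat_seg[OF \<open>finite Q\<close>] by blast
  define h where "h = inv_into Q g"
  define \<delta>' where "\<delta>' = (\<lambda>n a. g (\<delta> (h n) a))"
  have h_g: "h (g q) = q" if "q \<in> Q" for q
    unfolding h_def using \<open>inj_on g Q\<close> that by simp
  have run: "foldl \<delta>' (g q) w = g (foldl \<delta> q w)" if "q \<in> Q" for q w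
    using that by (induction w arbitrary: q) (simp_all add: \<delta>'_def h_g closed)
  have "finite (g ` Q)" and "g q0 \<in> g ` Q" and "\<forall>n\<in>g ` Q. \<forall>a. \<delta>' n a \<in> g ` Q"
    using assms by (auto simp: \<delta>'_def h_g)
  moreover have "x n = (\<tau> \<circ> h) (foldl \<delta>' (g q0) (rep_ANS L n))" for n
    using assms by (simp add: run h_g foldl_in_closed)
  ultimately show ?thesis
    unfolding S_automatic_def by blast
qed

lemma rational_tree_if_S_automatic:
  assumes "regular L" and "S_automatic L x"
  shows "rational_tree L x"
proof -
  obtain Q q0 \<delta> \<tau> where "finite (Q::nat set)" and "q0 \<in> Q" and "\<forall>q\<in>Q. \<forall>a. \<delta> q a \<in> Q"
    and out: "\<And>n. x n = \<tau> (foldl \<delta> q0 (rep_ANS L n))"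
    using assms(2) unfolding S_automatic_def by blast
  obtain P p0 \<gamma> F where "finite (P::nat set)" and "p0 \<in> P" and "\<forall>p\<in>P. \<forall>a. \<gamma> p a \<in> P"
    and L_eq: "L = {w. foldl \<gamma> p0 w \<in> F}"
    using assms(1) unfolding regular_def by blast
  define G where "G = (\<lambda>(p, q) u. if foldl \<gamma> p u \<in> F then Some (\<tau> (foldl \<delta> q u)) else None)"
  have suffix_eq: "tree_suffix L x w = G (foldl \<gamma> p0 w, foldl \<delta> q0 w)" for w
  proof
    fix u
    have "x (val_ANS L (w @ u)) = \<tau> (foldl \<delta> q0 (w @ u))" if "w @ u \<in> L"
      using out[of "val_ANS L (w @ u)"] by (simp only: rep_ANS_val_ANS[OF that])
    moreover have "w @ u \<in> L \<longleftrightarrow> foldl \<gamma> (foldl \<gamma> p0 w) u \<in> F"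
      by (simp add: L_eq)
    ultimately show "tree_suffix L x w u = G (foldl \<gamma> p0 w, foldl \<delta> q0 w) u"
      unfolding tree_suffix_def G_def by simp
  qed
  have "(foldl \<gamma> p0 w, foldl \<delta> q0 w) \<in> P \<times> Q" for w
    using \<open>p0 \<in> P\<close> \<open>q0 \<in> Q\<close> \<open>\<forall>p\<in>P. \<forall>a. \<gamma> p a \<in> P\<close> \<open>\<forall>q\<in>Q. \<forall>a. \<delta> q a \<in> Q\<close>
    by (simp add: foldl_in_closed)
  then have "tree_suffix L x ` L \<subseteq> G ` (P \<times> Q)"
    unfolding suffix_eq by blast
  moreover have "finite (G ` (P \<times> Q))"
    using \<open>finite P\<close> \<open>finite Q\<close> by simp
  ultimately show ?thesis
    unfolding rational_tree_def by (rule finite_subset)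
qed

lemma S_automatic_if_rational_tree:
  assumes "infinite L" and "prefix_closed L" and "rational_tree L x"
  shows "S_automatic L x"
proof (rule S_automaticI)
  show "finite (range (tree_suffix L x))"
    using assms(2,3) by (rule finite_range_tree_suffix)
  have step: "(\<lambda>u. tree_suffix L x w (a # u)) = tree_suffix L x (w @ [a])" for w a
    by (simp add: tree_suffix_append)
  then show "\<forall>t\<in>range (tree_suffix L x). \<forall>a. (\<lambda>u. t (a # u)) \<in> range (tree_suffix L x)"
    by auto
  have run: "foldl (\<lambda>t a u. t (a # u)) (tree_suffix L x []) w = tree_suffix L x w" for w
    by (induction w rule: rev_induct) (simp_all add: step)
  show "x n = the (foldl (\<lambda>t a u. t (a # u)) (tree_suffix L x []) (rep_ANS L n) [])" for n
  proof -
    obtain w where "w \<in> L" and "n = val_ANS L w"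
      using val_ANS_surj[OF assms(1)] by blast
    then have "rep_ANS L n = w" and "tree_suffix L x w [] = Some (x n)"
      by (simp_all add: rep_ANS_val_ANS tree_suffix_def)
    then show ?thesis
      by (simp add: run)
  qed
qed simp

theorem mainTheorem8:
  fixes L :: "('a::{finite,linorder}) list set"
    and x :: "nat \<Rightarrow> 'b::finite"
  assumes "infinite L"
    and "prefix_closed L"
    and "regular L"
  shows "S_automatic L x \<longleftrightarrow> rational_tree L x"
  using assms rational_tree_if_S_automatic S_automatic_if_rational_tree by blast

end
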